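(* Let $(P,\leq,{}',R,0,1)$ be a conditionally operator residuated poset satisfying operator divisibility, and assume $R(x,y)=LU(x',y)$ for all $x,y\in P$. Then $(P,\leq,{}',0,1)$ is a generalized orthomodular poset.
   Context: For a poset $(P,\leq)$ and $A\subseteq P$: $L(A):=\{x\in P\mid x\leq a\text{ for all }a\in A\}$, $U(A):=\{x\in P\mid a\leq x\text{ for all }a\in A\}$; $L(a,b)$ means $L(\{a,b\})$, $L(a,B)$ means $L(\{a\}\cup B)$, $LU(A)=L(U(A))$. An orthoposet is a bounded poset $(P,\leq,{}',0,1)$ with a unary operation $'$ that is an antitone involution ($x''=x$, and $x\leq y\Rightarrow y'\leq x'$) and a complementation ($L(x,x')=\{0\}$, $U(x,x')=\{1\}$). A generalized orthomodular poset is an orthoposet satisfying: for all $x,y$, $x\leq y$ implies $U(y)=U(x,L(x',y))$. A conditionally operator residuated poset is a tuple $(P,\leq,{}',R,0,1)$ where $(P,\leq,0,1)$ is a bounded poset, $'$ is an antitone unary operation ($x\leq y\Rightarrow y'\leq x'$), and $R:P^2\to 2^P$ satisfies for all $x,y,z\in P$: (i) if $x'\leq y$ then $L(x,y)\subseteq L(z)$ implies $L(x)\subseteq R(y,z)$; (ii) if $z\leq y$ then $L(x)\subseteq R(y,z)$ implies $L(x,y)\subseteq L(z)$; (iii) $R(x,0)=L(x')$; (iv) $R(x'',x)=P$. It satisfies operator divisibility if $x\leq y$ implies $L(y,U(R(y,x)))=L(x)$. *)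

theory Defs
  imports Main
begin

text \<open>The poset P is the whole carrier of a type of classes order_bot and order_top
  (order \<le>, least element bot = 0, greatest element top = 1).\<close>

definition Lset :: "'a::order set \<Rightarrow> 'a set" where
  "Lset A = {x. \<forall>a\<in>A. x \<le> a}"

definition Uset :: "'a::order set \<Rightarrow> 'a set" where
  "Uset A = {x. \<forall>a\<in>A. a \<le> x}"

definition antitone_op :: "('a::order \<Rightarrow> 'a) \<Rightarrow> bool" where
  "antitone_op c \<longleftrightarrow> (\<forall>x y. x \<le> y \<longrightarrow> c y \<le> c x)"

definition orthoposet :: "('a::{order_bot,order_top} \<Rightarrow> 'a) \<Rightarrow> bool" where
  "orthoposet c \<longleftrightarrow> antitone_op c \<and> (\<forall>x. c (c x) = x)
     \<and> (\<forall>x. Lset {x, c x} = {bot}) \<and> (\<forall>x. Uset {x, c x} = {top})"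

definition generalized_orthomodular :: "('a::{order_bot,order_top} \<Rightarrow> 'a) \<Rightarrow> bool" where
  "generalized_orthomodular c \<longleftrightarrow> orthoposet c \<and>
     (\<forall>x y. x \<le> y \<longrightarrow> Uset {y} = Uset ({x} \<union> Lset {c x, y}))"

definition cond_op_residuated ::
  "('a::{order_bot,order_top} \<Rightarrow> 'a) \<Rightarrow> ('a \<Rightarrow> 'a \<Rightarrow> 'a set) \<Rightarrow> bool" where
  "cond_op_residuated c R \<longleftrightarrow> antitone_op c \<and>
     (\<forall>x y z. c x \<le> y \<longrightarrow> Lset {x, y} \<subseteq> Lset {z} \<longrightarrow> Lset {x} \<subseteq> R y z) \<and>
     (\<forall>x y z. z \<le> y \<longrightarrow> Lset {x} \<subseteq> R y z \<longrightarrow> Lset {x, y} \<subseteq> Lset {z}) \<and>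
     (\<forall>x. R x bot = Lset {c x}) \<and>
     (\<forall>x. R (c (c x)) x = UNIV)"

definition operator_divisibility ::
  "('a::{order_bot,order_top} \<Rightarrow> 'a) \<Rightarrow> ('a \<Rightarrow> 'a \<Rightarrow> 'a set) \<Rightarrow> bool" where
  "operator_divisibility c R \<longleftrightarrow>
     (\<forall>x y. x \<le> y \<longrightarrow> Lset ({y} \<union> Uset (R y x)) = Lset {x})"

end

theory Submission
  imports Defs
begin

text \<open>Axioms (ii) and (iii) give L(x, x') = 0, and then (i) and (iii) give x \<le> x''.
  Divisibility at x \<le> x'', where R(x'', x) = P by (iv), yields x'' \<le> x, so ' is an
  involution; with R(x, y) = LU(x', y), axiom (iv) becomes U(x, x') = 1. Finally, an
  antitone involution interchanges lower and upper cones, and under this duality the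
  divisibility condition at y' \<le> x' is exactly the generalized orthomodular law at x \<le> y.\<close>

lemma Uset_Lset_Uset: "Uset (Lset (Uset A)) = Uset A"
  unfolding Lset_def Uset_def by auto

lemma Uset_UNIV: "Uset (UNIV :: 'a::order_top set) = {top}"
  unfolding Uset_def by (auto simp: top_le)

lemma Uset_eq_top_if_Lset_Uset_eq_UNIV:
  assumes "Lset (Uset A) = (UNIV :: 'a::order_top set)"
  shows "Uset A = {top}"
proof -
  have "top \<in> Lset (Uset A)" using assms by simp
  then show ?thesis unfolding Lset_def Uset_def by (auto simp: top_unique)
qed

lemma antitone_involution_image_Lset:
  assumes "antitone_op c" and "\<And>x. c (c x) = x"
  shows "c ` Lset A = Uset (c ` A)"
proof (intro set_eqI iffI)
  fix z assume "z \<in> c ` Lset A"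
  then show "z \<in> Uset (c ` A)"
    using assms(1) unfolding Lset_def Uset_def antitone_op_def by blast
next
  fix z assume z: "z \<in> Uset (c ` A)"
  have "c z \<in> Lset A"
    unfolding Lset_def
  proof (intro CollectI ballI)
    fix a assume "a \<in> A"
    then have "c a \<le> z" using z unfolding Uset_def by blast
    then show "c z \<le> a" using assms unfolding antitone_op_def by metis
  qed
  then show "z \<in> c ` Lset A" using assms(2) by (metis image_eqI)
qed

lemma antitone_involution_image_Uset:
  assumes "antitone_op c" and "\<And>x. c (c x) = x"
  shows "c ` Uset A = Lset (c ` A)"
proof -
  have image_twice: "c ` c ` B = B" for B
    using assms(2) by (simp add: image_comp comp_def)
  have "c ` Uset A = c ` Uset (c ` c ` A)" by (simp only: image_twice)
  also have "\<dots> = c ` c ` Lset (c ` A)"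
    by (simp only: antitone_involution_image_Lset[OF assms])
  also have "\<dots> = Lset (c ` A)" by (rule image_twice)
  finally show ?thesis .
qed

lemma
  assumes "cond_op_residuated c R"
  shows cond_op_residuated_antitone: "antitone_op c"
    and cond_op_residuated_residualI: "c x \<le> y \<Longrightarrow> Lset {x, y} \<subseteq> Lset {z} \<Longrightarrow> Lset {x} \<subseteq> R y z"
    and cond_op_residuated_residualD: "z \<le> y \<Longrightarrow> Lset {x} \<subseteq> R y z \<Longrightarrow> Lset {x, y} \<subseteq> Lset {z}"
    and cond_op_residuated_R_bot: "R x bot = Lset {c x}"
    and cond_op_residuated_R_double_compl: "R (c (c x)) x = UNIV"
  using assms unfolding cond_op_residuated_def by blast+

lemma operator_divisibilityD:
  "operator_divisibility c R \<Longrightarrow> x \<le> y \<Longrightarrow> Lset ({y} \<union> Uset (R y x)) = Lset {x}"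
  unfolding operator_divisibility_def by blast

lemma cond_op_residuated_Lset_compl:
  assumes "cond_op_residuated c R"
  shows "Lset {x, c x} = {bot}"
proof -
  have "Lset {c x} \<subseteq> R x bot"
    using cond_op_residuated_R_bot[OF assms] by simp
  then have "Lset {c x, x} \<subseteq> Lset {bot}"
    by (rule cond_op_residuated_residualD[OF assms bot_least])
  then show ?thesis unfolding Lset_def by (auto intro: antisym)
qed

lemma cond_op_residuated_le_double_compl:
  assumes "cond_op_residuated c R"
  shows "x \<le> c (c x)"
proof -
  have "Lset {x, c x} \<subseteq> Lset {bot}"
    using cond_op_residuated_Lset_compl[OF assms] unfolding Lset_def by auto
  then have "Lset {x} \<subseteq> R (c x) bot"
    by (rule cond_op_residuated_residualI[OF assms order_refl])
  also have "\<dots> = Lset {c (c x)}"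
    by (rule cond_op_residuated_R_bot[OF assms])
  finally show ?thesis unfolding Lset_def by auto
qed

lemma cond_op_residuated_double_compl:
  assumes "cond_op_residuated c R" and "operator_divisibility c R"
  shows "c (c x) = x"
proof -
  have "Lset ({c (c x)} \<union> Uset (R (c (c x)) x)) = Lset {x}"
    by (rule operator_divisibilityD[OF assms(2) cond_op_residuated_le_double_compl[OF assms(1)]])
  then have "Lset ({c (c x)} \<union> {top}) = Lset {x}"
    by (simp only: cond_op_residuated_R_double_compl[OF assms(1)] Uset_UNIV)
  then have "c (c x) \<le> x" unfolding Lset_def by auto
  then show ?thesis
    using cond_op_residuated_le_double_compl[OF assms(1)] by (rule antisym)
qed

theorem mainTheorem2:
  fixes c :: "'a::{order_bot,order_top} \<Rightarrow> 'a" and R :: "'a \<Rightarrow> 'a \<Rightarrow> 'a set"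
  assumes "cond_op_residuated c R"
    and "operator_divisibility c R"
    and "\<forall>x y. R x y = Lset (Uset {c x, y})"
  shows "generalized_orthomodular c"
proof -
  have anti: "antitone_op c" using assms(1) by (rule cond_op_residuated_antitone)
  have inv: "\<And>x. c (c x) = x" using assms(1,2) by (rule cond_op_residuated_double_compl)
  have R_compl: "\<And>x y. R (c x) y = Lset (Uset {x, y})" using assms(3) inv by simp
  have "Uset {x, c x} = {top}" for x
    using cond_op_residuated_R_double_compl[OF assms(1), of x]
    by (intro Uset_eq_top_if_Lset_Uset_eq_UNIV) (simp add: R_compl insert_commute)
  moreover have "Uset {y} = Uset ({x} \<union> Lset {c x, y})" if "x \<le> y" for x y
  proof -
    have "c y \<le> c x" using anti that unfolding antitone_op_def by blast
    then have "Lset ({c x} \<union> Uset (R (c x) (c y))) = Lset {c y}"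
      by (rule operator_divisibilityD[OF assms(2)])
    then have "Lset ({c x} \<union> Uset {x, c y}) = Lset {c y}"
      by (simp only: R_compl Uset_Lset_Uset)
    then have "c ` Lset ({c x} \<union> Uset {x, c y}) = c ` Lset {c y}" by simp
    then show ?thesis
      by (simp add: antitone_involution_image_Lset[OF anti inv]
          antitone_involution_image_Uset[OF anti inv] inv)
  qed
  ultimately show ?thesis
    unfolding generalized_orthomodular_def orthoposet_def
    using anti inv cond_op_residuated_Lset_compl[OF assms(1)] by blast
qed

end
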